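(* Let $n\ge2$, let $x,y\in\mathbb C^n$, and let $B=xe_n^\ast+e_ny^\ast\in M_n(\mathbb C)$ have nonzero entries at positions $(1,n)$, $(n,1)$ and $(n,n)$. Then $B$ has rank two, so its singular value decomposition has the form $B=\sigma_1u_1v_1^\ast+\sigma_2u_2v_2^\ast$ with $\sigma_1\ge\sigma_2>0$ and orthonormal pairs $u_1,u_2$ and $v_1,v_2$; both summands $\sigma_iu_iv_i^\ast$ have nonzero $(1,1)$ entry; and $\sigma_1(B)>\sigma_2(B)$.
   Context: $e_1,\dots,e_n$ is the standard basis of $\mathbb C^n$ (column vectors), and $\sigma_1(B)\ge\sigma_2(B)\ge\dots$ denote the singular values of $B$. *)

theory Defs
  imports "Jordan_Normal_Form.Schur_Decomposition" "Jordan_Normal_Form.DL_Rank" "Jordan_Normal_Form.Gram_Schmidt"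
begin

definition outer_adj :: "complex vec \<Rightarrow> complex vec \<Rightarrow> complex mat" where
  "outer_adj u v = mat (dim_vec u) (dim_vec v) (\<lambda>(i,j). u $ i * cnj (v $ j))"

definition sing_vals :: "complex mat \<Rightarrow> real list" where
  "sing_vals A = (THE s. length s = dim_col A \<and> sorted_wrt (\<ge>) s \<and> (\<forall>t\<in>set s. t \<ge> 0) \<and>
     char_poly (mat_adjoint A * A) = (\<Prod>t\<leftarrow>s. [:- complex_of_real (t^2), 1:]))"

definition rank2_svd :: "nat \<Rightarrow> complex mat \<Rightarrow> real \<Rightarrow> real \<Rightarrow> complex vec \<Rightarrow> complex vec
    \<Rightarrow> complex vec \<Rightarrow> complex vec \<Rightarrow> bool" where
  "rank2_svd n B s1 s2 u1 u2 v1 v2 \<longleftrightarrow>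
     u1 \<in> carrier_vec n \<and> u2 \<in> carrier_vec n \<and> v1 \<in> carrier_vec n \<and> v2 \<in> carrier_vec n \<and>
     u1 \<bullet>c u1 = 1 \<and> u2 \<bullet>c u2 = 1 \<and> u1 \<bullet>c u2 = 0 \<and>
     v1 \<bullet>c v1 = 1 \<and> v2 \<bullet>c v2 = 1 \<and> v1 \<bullet>c v2 = 0 \<and>
     s1 \<ge> s2 \<and> s2 > 0 \<and>
     B = complex_of_real s1 \<cdot>\<^sub>m outer_adj u1 v1 + complex_of_real s2 \<cdot>\<^sub>m outer_adj u2 v2"

end

theory Submission
  imports Defs "Jordan_Normal_Form.DL_Rank_Submatrix"
begin

(* Let N be the last index and x', y' the vectors x, y with their last entry set to 0.
   The matrix B = x e_N^* + e_N y^* kills the orthogonal complement of span {y', e_N}, maps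
   y' to |y'|^2 e_N and e_N to x' + c e_N, where c = x_N + cnj y_N.  In the orthonormal pairs
   (y'/|y'|, e_N) and (x'/|x'|, e_N) it is therefore the 2x2 matrix M = [[0, |x'|], [|y'|, c]],
   and B inherits the singular value decomposition of M.  The two eigenvalues of M^* M differ
   because the discriminant of its characteristic polynomial is
   (|x'|^2 - |y'|^2)^2 + |c|^2 (2 |x'|^2 + 2 |y'|^2 + |c|^2) > 0.
   Every rank-two decomposition gives B^* B = s1^2 v1 v1^* + s2^2 v2 v2^*, so by Sylvester's
   determinant identity the characteristic polynomial of B^* B is X^(n-2) (X - s1^2) (X - s2^2),
   which pins down the singular values.  Finally B v = s u and B^* u = s v force u_N and v_N to be
   nonzero, and then s u_0 = x_0 v_N and s v_0 = y_0 u_N are nonzero too. *)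

lemma mat_adjoint_index [simp]:
  fixes A :: "complex mat"
  shows "i < dim_col A \<Longrightarrow> j < dim_row A \<Longrightarrow> mat_adjoint A $$ (i, j) = cnj (A $$ (j, i))"
  unfolding mat_adjoint_def by (simp add: mat_of_rows_def)

lemma mat_adjoint_dim [simp]:
  "dim_row (mat_adjoint A) = dim_col A" "dim_col (mat_adjoint A) = dim_row A"
  unfolding mat_adjoint_def by (simp_all add: mat_of_rows_def)

lemma mat_adjoint_carrier [simp]: "A \<in> carrier_mat m n \<Longrightarrow> mat_adjoint A \<in> carrier_mat n m"
  by (rule carrier_matI) auto

lemma cscalar_prod_sum:
  fixes v w :: "complex vec"
  shows "v \<in> carrier_vec n \<Longrightarrow> w \<in> carrier_vec n \<Longrightarrow> v \<bullet>c w = (\<Sum>i<n. v $ i * cnj (w $ i))"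
  unfolding scalar_prod_def by (simp add: atLeast0LessThan)

lemma cscalar_prod_swap:
  fixes v w :: "complex vec"
  shows "v \<in> carrier_vec n \<Longrightarrow> w \<in> carrier_vec n \<Longrightarrow> w \<bullet>c v = cnj (v \<bullet>c w)"
  by (simp add: cscalar_prod_sum[of _ n] cnj_sum mult.commute)

lemma cscalar_prod_smult_left:
  fixes v w :: "complex vec"
  shows "v \<in> carrier_vec n \<Longrightarrow> w \<in> carrier_vec n \<Longrightarrow> (a \<cdot>\<^sub>v v) \<bullet>c w = a * (v \<bullet>c w)"
  by (simp add: cscalar_prod_sum[of _ n] sum_distrib_left mult.assoc)

lemma cscalar_prod_smult_right:
  fixes v w :: "complex vec"
  shows "v \<in> carrier_vec n \<Longrightarrow> w \<in> carrier_vec n \<Longrightarrow> v \<bullet>c (a \<cdot>\<^sub>v w) = cnj a * (v \<bullet>c w)"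
  by (simp add: cscalar_prod_sum[of _ n] sum_distrib_left mult_ac)

lemma cscalar_prod_unit_vec:
  fixes w :: "complex vec"
  assumes w: "w \<in> carrier_vec n" and k: "k < n"
  shows "w \<bullet>c unit_vec n k = w $ k"
proof -
  have "w \<bullet>c unit_vec n k = (\<Sum>i<n. if i = k then w $ k else 0)"
    unfolding cscalar_prod_sum[OF w unit_vec_carrier] using k by (intro sum.cong) auto
  then show ?thesis using k by simp
qed

lemma cscalar_prod_single_support:
  fixes w z :: "complex vec"
  assumes w: "w \<in> carrier_vec n" and z: "z \<in> carrier_vec n" and k: "k < n"
    and supp: "\<And>i. i < n \<Longrightarrow> i \<noteq> k \<Longrightarrow> w $ i = 0"
  shows "w \<bullet>c z = w $ k * cnj (z $ k)"
proof -
  have "w \<bullet>c z = (\<Sum>i<n. if i = k then w $ k * cnj (z $ k) else 0)"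
    unfolding cscalar_prod_sum[OF w z] using supp by (intro sum.cong) auto
  then show ?thesis using k by simp
qed

lemma mult_mat_vec_cscalar_prod:
  fixes A :: "complex mat"
  assumes A: "A \<in> carrier_mat m n" and v: "v \<in> carrier_vec n" and w: "w \<in> carrier_vec m"
  shows "(A *\<^sub>v v) \<bullet>c w = v \<bullet>c (mat_adjoint A *\<^sub>v w)"
proof -
  have "(A *\<^sub>v v) \<bullet>c w = (\<Sum>i<m. \<Sum>k<n. A $$ (i, k) * v $ k * cnj (w $ i))"
    using A v w by (simp add: cscalar_prod_sum[of _ m] scalar_prod_def sum_distrib_right atLeast0LessThan)
  also have "\<dots> = (\<Sum>k<n. \<Sum>i<m. A $$ (i, k) * v $ k * cnj (w $ i))"
    by (rule sum.swap)
  also have "\<dots> = v \<bullet>c (mat_adjoint A *\<^sub>v w)"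
    using A v w by (simp add: cscalar_prod_sum[of _ n] scalar_prod_def sum_distrib_left atLeast0LessThan mult_ac)
  finally show ?thesis .
qed

lemma smult_mat_mult_vec: "v \<in> carrier_vec (dim_col A) \<Longrightarrow> (a \<cdot>\<^sub>m A) *\<^sub>v v = a \<cdot>\<^sub>v (A *\<^sub>v v)"
  by (intro eq_vecI) (auto simp: scalar_prod_def sum_distrib_left mult.assoc)

lemma smult_smult_mat: "a \<cdot>\<^sub>m (b \<cdot>\<^sub>m (A :: 'a :: semigroup_mult mat)) = (a * b) \<cdot>\<^sub>m A"
  by (intro eq_matI) (auto simp: mult.assoc)

lemma outer_adj_index [simp]:
  "i < dim_vec u \<Longrightarrow> j < dim_vec v \<Longrightarrow> outer_adj u v $$ (i, j) = u $ i * cnj (v $ j)"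
  unfolding outer_adj_def by simp

lemma outer_adj_dim [simp]:
  "dim_row (outer_adj u v) = dim_vec u" "dim_col (outer_adj u v) = dim_vec v"
  unfolding outer_adj_def by simp_all

lemma outer_adj_carrier [simp]:
  "u \<in> carrier_vec n \<Longrightarrow> v \<in> carrier_vec m \<Longrightarrow> outer_adj u v \<in> carrier_mat n m"
  by (rule carrier_matI) auto

lemma outer_adj_smult_left: "outer_adj (a \<cdot>\<^sub>v u) v = a \<cdot>\<^sub>m outer_adj u v"
  by (intro eq_matI) auto

lemma outer_adj_mult_vec:
  assumes "w \<in> carrier_vec (dim_vec v)"
  shows "outer_adj u v *\<^sub>v w = (w \<bullet>c v) \<cdot>\<^sub>v u"
  using assms by (intro eq_vecI) (auto simp: scalar_prod_def sum_distrib_left mult_ac)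

lemma mult_outer_adj:
  assumes "A \<in> carrier_mat m n" and "u \<in> carrier_vec n"
  shows "A * outer_adj u v = outer_adj (A *\<^sub>v u) v"
  using assms by (intro eq_matI) (auto simp: scalar_prod_def sum_distrib_right mult.assoc)

lemma outer_adj_mult_adjoint:
  assumes "A \<in> carrier_mat m n" and "v \<in> carrier_vec n"
  shows "outer_adj u v * mat_adjoint A = outer_adj u (A *\<^sub>v v)"
  using assms by (intro eq_matI) (auto simp: scalar_prod_def sum_distrib_left mult_ac)

lemma mat_adjoint_mult_mat_of_cols_2:
  fixes g1 g2 :: "complex vec"
  assumes g: "g1 \<in> carrier_vec n" "g2 \<in> carrier_vec n"
    and orth: "g1 \<bullet>c g1 = 1" "g2 \<bullet>c g2 = 1" "g1 \<bullet>c g2 = 0"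
  shows "mat_adjoint (mat_of_cols n [g1, g2]) * mat_of_cols n [g1, g2] = 1\<^sub>m 2"
  using g orth cscalar_prod_swap[OF g]
  by (intro eq_matI) (auto simp: scalar_prod_def cscalar_prod_sum[of _ n] numeral_2_eq_2 less_Suc_eq
      mat_of_cols_index mult.commute)

lemma outer_adj_orthonormal_pair_2:
  fixes q1 q2 :: "complex vec"
  assumes q: "q1 \<in> carrier_vec 2" "q2 \<in> carrier_vec 2"
    and orth: "q1 \<bullet>c q1 = 1" "q2 \<bullet>c q2 = 1" "q1 \<bullet>c q2 = 0"
  shows "outer_adj q1 q1 + outer_adj q2 q2 = 1\<^sub>m 2"
proof -
  define Q where "Q = mat_of_cols 2 [q1, q2]"
  have Q: "Q \<in> carrier_mat 2 2"
    unfolding Q_def using mat_of_cols_carrier[of 2 "[q1, q2]"] by (simp add: numeral_2_eq_2)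
  have "Q * mat_adjoint Q = 1\<^sub>m 2"
    using mat_mult_left_right_inverse[OF mat_adjoint_carrier[OF Q] Q]
      mat_adjoint_mult_mat_of_cols_2[OF q orth] unfolding Q_def by blast
  moreover have "Q * mat_adjoint Q = outer_adj q1 q1 + outer_adj q2 q2"
    using q unfolding Q_def
    by (intro eq_matI) (auto simp: scalar_prod_def numeral_2_eq_2 mat_of_cols_index)
  ultimately show ?thesis by simp
qed

lemma det_2x2:
  assumes "(A :: 'a :: comm_ring_1 mat) \<in> carrier_mat 2 2"
  shows "det A = A $$ (0, 0) * A $$ (1, 1) - A $$ (0, 1) * A $$ (1, 0)"
proof -
  have minor: "det (mat_delete A i j) = mat_delete A i j $$ (0, 0)" for i j
    using mat_delete_carrier[OF assms] by (intro det_single) auto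
  show ?thesis
    unfolding laplace_expansion_column[OF assms, of 0, simplified] cofactor_def minor
    using assms by (simp add: numeral_2_eq_2 mat_delete_def insert_index_def)
qed

(* Sylvester's determinant identity: multiply the block matrix [[t I, A], [B, I]] by
   block-triangular matrices on the left and on the right. *)
lemma det_scalar_sub_mult_commute:
  fixes A :: "'a :: field mat"
  assumes A: "A \<in> carrier_mat n k" and B: "B \<in> carrier_mat k n"
  shows "t ^ k * det (t \<cdot>\<^sub>m 1\<^sub>m n - A * B) = t ^ n * det (t \<cdot>\<^sub>m 1\<^sub>m k - B * A)"
proof -
  define M where "M = four_block_mat (t \<cdot>\<^sub>m 1\<^sub>m n) A B (1\<^sub>m k)"
  define L where "L = four_block_mat (1\<^sub>m n) (- A) (0\<^sub>m k n) (1\<^sub>m k)"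
  define R where "R = four_block_mat (1\<^sub>m n) (- A) (0\<^sub>m k n) (t \<cdot>\<^sub>m 1\<^sub>m k)"
  have M: "M \<in> carrier_mat (n + k) (n + k)" unfolding M_def using A B by auto
  have L: "L \<in> carrier_mat (n + k) (n + k)" and R: "R \<in> carrier_mat (n + k) (n + k)"
    unfolding L_def R_def using A by auto
  have LM: "L * M = four_block_mat (t \<cdot>\<^sub>m 1\<^sub>m n - A * B) (0\<^sub>m n k) B (1\<^sub>m k)"
    unfolding L_def M_def using A B
    by (subst mult_four_block_mat) (auto simp: minus_add_uminus_mat[symmetric])
  have "det L * det M = det (t \<cdot>\<^sub>m 1\<^sub>m n - A * B)"
    unfolding det_mult[OF L M, symmetric] LM using A B
    by (subst det_four_block_mat_upper_right_zero[where n = n and m = k]) auto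
  moreover have "det L = 1"
    unfolding L_def using A by (simp add: det_four_block_mat_lower_left_zero[where n = n and m = k])
  ultimately have det_M: "det M = det (t \<cdot>\<^sub>m 1\<^sub>m n - A * B)" by simp
  have "t \<cdot>\<^sub>m 1\<^sub>m n * A = t \<cdot>\<^sub>m A" "A * (t \<cdot>\<^sub>m 1\<^sub>m k) = t \<cdot>\<^sub>m A"
    using mult_smult_assoc_mat[of "1\<^sub>m n" n n A k t] mult_smult_distrib[of A n k "1\<^sub>m k" k t] A
    by auto
  then have upper: "- (t \<cdot>\<^sub>m 1\<^sub>m n * A) + A * (t \<cdot>\<^sub>m 1\<^sub>m k) = 0\<^sub>m n k"
    using A by simp
  have lower: "t \<cdot>\<^sub>m 1\<^sub>m k + - (B * A) = t \<cdot>\<^sub>m 1\<^sub>m k - B * A"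
    using A B by (intro minus_add_uminus_mat[symmetric]) auto
  have MR: "M * R = four_block_mat (t \<cdot>\<^sub>m 1\<^sub>m n) (0\<^sub>m n k) B (t \<cdot>\<^sub>m 1\<^sub>m k - B * A)"
    unfolding R_def M_def using A B
    by (subst mult_four_block_mat) (auto simp: upper lower comm_add_mat[of "- (B * A)" k k])
  have "det M * det R = t ^ n * det (t \<cdot>\<^sub>m 1\<^sub>m k - B * A)"
    unfolding det_mult[OF M R, symmetric] MR using A B
    by (subst det_four_block_mat_upper_right_zero[where n = n and m = k]) auto
  moreover have "det R = t ^ k"
    unfolding R_def using A by (simp add: det_four_block_mat_lower_left_zero[where n = n and m = k])
  ultimately show ?thesis unfolding det_M by (simp add: mult.commute)
qed

lemma char_poly_mult_commute:
  fixes A :: "'a :: field_char_0 mat"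
  assumes A: "A \<in> carrier_mat n k" and B: "B \<in> carrier_mat k n"
  shows "[:0, 1:] ^ k * char_poly (A * B) = [:0, 1:] ^ n * char_poly (B * A)"
proof -
  have char_matrix: "- char_matrix C t = t \<cdot>\<^sub>m 1\<^sub>m m - C" if "C \<in> carrier_mat m m" for C :: "'a mat" and m t
    using that unfolding char_matrix_def by (intro eq_matI) auto
  have "poly ([:0, 1:] ^ k * char_poly (A * B)) t = poly ([:0, 1:] ^ n * char_poly (B * A)) t" for t
    using A B det_scalar_sub_mult_commute[OF A B, of t]
      char_matrix[of "A * B" n t] char_matrix[of "B * A" k t]
    by (simp add: char_poly_matrix[of _ n] char_poly_matrix[of _ k])
  then show ?thesis by (simp add: poly_eq_poly_eq_iff[symmetric] fun_eq_iff)
qed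

lemma char_poly_orthonormal_pair:
  fixes v1 v2 :: "complex vec"
  assumes n: "2 \<le> n" and v: "v1 \<in> carrier_vec n" "v2 \<in> carrier_vec n"
    and orth: "v1 \<bullet>c v1 = 1" "v2 \<bullet>c v2 = 1" "v1 \<bullet>c v2 = 0"
  shows "char_poly (a1 \<cdot>\<^sub>m outer_adj v1 v1 + a2 \<cdot>\<^sub>m outer_adj v2 v2)
    = [:- a1, 1:] * [:- a2, 1:] * [:0, 1:] ^ (n - 2)"
proof -
  define V where "V = mat_of_cols n [v1, v2]"
  define W where "W = mat_of_rows n [a1 \<cdot>\<^sub>v conjugate v1, a2 \<cdot>\<^sub>v conjugate v2]"
  have V: "V \<in> carrier_mat n 2" and W: "W \<in> carrier_mat 2 n"
    unfolding V_def W_def using v by auto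
  have VW: "a1 \<cdot>\<^sub>m outer_adj v1 v1 + a2 \<cdot>\<^sub>m outer_adj v2 v2 = V * W"
    using v V W unfolding V_def W_def
    by (intro eq_matI) (auto simp: scalar_prod_def numeral_2_eq_2 mat_of_cols_index mat_of_rows_index)
  have gram: "conjugate w \<bullet> w' = w' \<bullet>c w" if "w \<in> carrier_vec n" "w' \<in> carrier_vec n" for w w' :: "complex vec"
    using conjugate_vec_sprod_comm[OF that(2,1)] by simp
  have "W * V = mat_diag 2 (\<lambda>l. [a1, a2] ! l)"
    using v orth cscalar_prod_swap[OF v] unfolding V_def W_def mat_diag_def
    by (intro eq_matI) (auto simp: gram numeral_2_eq_2 less_Suc_eq)
  then have char_poly_WV: "char_poly (W * V) = [:- a1, 1:] * [:- a2, 1:]"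
    by (simp add: char_poly_upper_triangular[of _ 2] upper_triangular_def diag_mat_def mat_diag_def numeral_2_eq_2)
  have pow: "[:0, 1:] ^ n = [:0, 1:] ^ 2 * [:0, 1:] ^ (n - 2)"
    using n by (metis le_add_diff_inverse power_add)
  have "[:0, 1:] ^ 2 * char_poly (V * W) = [:0, 1:] ^ 2 * ([:0, 1:] ^ (n - 2) * char_poly (W * V))"
    using char_poly_mult_commute[OF V W] unfolding pow by (simp only: mult.assoc)
  then have "char_poly (V * W) = [:0, 1:] ^ (n - 2) * char_poly (W * V)"
    by (subst (asm) mult_left_cancel) simp_all
  then show ?thesis unfolding VW char_poly_WV by (simp only: mult.commute)
qed

lemma proots_prod_linear_factors: "proots (\<Prod>a\<leftarrow>xs. [:- a, 1:]) = mset xs"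
proof (induction xs)
  case (Cons a xs)
  have "(\<Prod>b\<leftarrow>xs. [:- b, 1:]) \<noteq> 0"
    by (auto simp: prod_list_zero_iff)
  then have "proots ([:- a, 1:] * (\<Prod>b\<leftarrow>xs. [:- b, 1:])) = {#a#} + mset xs"
    by (subst proots_mult) (simp_all add: Cons.IH)
  then show ?case by simp
qed simp

lemma sorted_wrt_ge_mset_eq:
  fixes s t :: "'a :: linorder list"
  assumes "sorted_wrt (\<ge>) s" "sorted_wrt (\<ge>) t" "mset s = mset t"
  shows "s = t"
proof -
  have "sorted (rev s)" "sorted (rev t)" "mset (rev s) = mset (rev t)"
    using assms by (simp_all add: sorted_wrt_rev)
  then have "rev s = rev t" by (metis properties_for_sort)
  then show ?thesis by simp
qed

lemma sing_vals_eqI: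
  assumes "length s = dim_col A" "sorted_wrt (\<ge>) s" "\<forall>t\<in>set s. t \<ge> 0"
    and "char_poly (mat_adjoint A * A) = (\<Prod>t\<leftarrow>s. [:- complex_of_real (t^2), 1:])"
  shows "sing_vals A = s"
  unfolding sing_vals_def
proof (rule the_equality)
  fix r
  assume r: "length r = dim_col A \<and> sorted_wrt (\<ge>) r \<and> (\<forall>t\<in>set r. t \<ge> 0) \<and>
     char_poly (mat_adjoint A * A) = (\<Prod>t\<leftarrow>r. [:- complex_of_real (t^2), 1:])"
  let ?sq = "\<lambda>t::real. complex_of_real (t^2)"
  have sq_eq: "mset (map ?sq r) = mset (map ?sq s)"
    using proots_prod_linear_factors[of "map ?sq r"] proots_prod_linear_factors[of "map ?sq s"]
      r assms(4) by (simp add: comp_def)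
  let ?sqrt = "\<lambda>z. sqrt (Re z)"
  have sqrt_sq: "map ?sqrt (map ?sq u) = u" if "\<forall>t\<in>set u. t \<ge> 0" for u
    using that by (induction u) auto
  have "mset r = image_mset ?sqrt (mset (map ?sq r))"
    using sqrt_sq[of r] r by (metis mset_map)
  also have "\<dots> = mset s"
    unfolding sq_eq using sqrt_sq[of s] assms(3) by (metis mset_map)
  finally have "mset r = mset s" .
  then show "r = s" using sorted_wrt_ge_mset_eq r assms(2) by blast
qed (use assms in auto)

section \<open>Rank-two singular value decompositions\<close>

lemma rank2_svd_carrier:
  "rank2_svd n B s1 s2 u1 u2 v1 v2 \<Longrightarrow> B \<in> carrier_mat n n"
  unfolding rank2_svd_def by auto

lemma rank2_svd_adjoint:
  assumes "rank2_svd n B s1 s2 u1 u2 v1 v2"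
  shows "rank2_svd n (mat_adjoint B) s1 s2 v1 v2 u1 u2"
proof -
  have "mat_adjoint B = complex_of_real s1 \<cdot>\<^sub>m outer_adj v1 u1 + complex_of_real s2 \<cdot>\<^sub>m outer_adj v2 u2"
    using assms rank2_svd_carrier[OF assms] unfolding rank2_svd_def
    by (intro eq_matI) (auto simp: algebra_simps)
  with assms show ?thesis unfolding rank2_svd_def by auto
qed

lemma rank2_svd_mult_vec:
  assumes svd: "rank2_svd n B s1 s2 u1 u2 v1 v2"
  shows "B *\<^sub>v v1 = complex_of_real s1 \<cdot>\<^sub>v u1" and "B *\<^sub>v v2 = complex_of_real s2 \<cdot>\<^sub>v u2"
proof -
  from svd have u: "u1 \<in> carrier_vec n" "u2 \<in> carrier_vec n" and v: "v1 \<in> carrier_vec n" "v2 \<in> carrier_vec n"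
    and B: "B = complex_of_real s1 \<cdot>\<^sub>m outer_adj u1 v1 + complex_of_real s2 \<cdot>\<^sub>m outer_adj u2 v2"
    unfolding rank2_svd_def by auto
  have mult: "B *\<^sub>v w = (complex_of_real s1 * (w \<bullet>c v1)) \<cdot>\<^sub>v u1 + (complex_of_real s2 * (w \<bullet>c v2)) \<cdot>\<^sub>v u2"
    if "w \<in> carrier_vec n" for w
    using that u v unfolding B
    by (subst add_mult_distrib_mat_vec[of _ n n]) (auto simp: smult_mat_mult_vec outer_adj_mult_vec smult_smult_assoc)
  have "v2 \<bullet>c v1 = 0"
    using svd cscalar_prod_swap[OF v] unfolding rank2_svd_def by simp
  with svd u v show "B *\<^sub>v v1 = complex_of_real s1 \<cdot>\<^sub>v u1" "B *\<^sub>v v2 = complex_of_real s2 \<cdot>\<^sub>v u2"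
    unfolding mult[OF v(1)] mult[OF v(2)] rank2_svd_def by auto
qed

lemma rank2_svd_adjoint_mult:
  assumes svd: "rank2_svd n B s1 s2 u1 u2 v1 v2"
  shows "mat_adjoint B * B = complex_of_real (s1^2) \<cdot>\<^sub>m outer_adj v1 v1 + complex_of_real (s2^2) \<cdot>\<^sub>m outer_adj v2 v2"
proof -
  from svd have u: "u1 \<in> carrier_vec n" "u2 \<in> carrier_vec n" and v: "v1 \<in> carrier_vec n" "v2 \<in> carrier_vec n"
    and B: "B = complex_of_real s1 \<cdot>\<^sub>m outer_adj u1 v1 + complex_of_real s2 \<cdot>\<^sub>m outer_adj u2 v2"
    unfolding rank2_svd_def by auto
  have adj: "mat_adjoint B \<in> carrier_mat n n" using rank2_svd_carrier[OF svd] by simp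
  note adj_mult = rank2_svd_mult_vec[OF rank2_svd_adjoint[OF svd]]
  have "mat_adjoint B * B = complex_of_real s1 \<cdot>\<^sub>m outer_adj (mat_adjoint B *\<^sub>v u1) v1
      + complex_of_real s2 \<cdot>\<^sub>m outer_adj (mat_adjoint B *\<^sub>v u2) v2"
    using u v adj by (subst (2) B, subst mult_add_distrib_mat[of _ n n])
      (auto simp: mult_smult_distrib[of _ n n _ n] mult_outer_adj)
  also have "\<dots> = complex_of_real (s1^2) \<cdot>\<^sub>m outer_adj v1 v1 + complex_of_real (s2^2) \<cdot>\<^sub>m outer_adj v2 v2"
    unfolding adj_mult outer_adj_smult_left smult_smult_mat by (simp add: power2_eq_square)
  finally show ?thesis .
qed

lemma sing_vals_rank2_svd:
  assumes n: "2 \<le> n" and svd: "rank2_svd n B s1 s2 u1 u2 v1 v2"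
  shows "sing_vals B = [s1, s2] @ replicate (n - 2) 0"
proof (rule sing_vals_eqI)
  from svd have v: "v1 \<in> carrier_vec n" "v2 \<in> carrier_vec n"
    and orth: "v1 \<bullet>c v1 = 1" "v2 \<bullet>c v2 = 1" "v1 \<bullet>c v2 = 0" and s: "s2 \<le> s1" "0 < s2"
    unfolding rank2_svd_def by auto
  show "length ([s1, s2] @ replicate (n - 2) 0) = dim_col B"
    using rank2_svd_carrier[OF svd] n by simp
  show "sorted_wrt (\<ge>) ([s1, s2] @ replicate (n - 2) 0)"
  proof -
    have "sorted_wrt (\<ge>) (replicate m (0::real))" for m by (induction m) auto
    with s show ?thesis by (auto simp: sorted_wrt_append)
  qed
  show "\<forall>t\<in>set ([s1, s2] @ replicate (n - 2) 0). 0 \<le> t"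
    using s by auto
  show "char_poly (mat_adjoint B * B)
      = (\<Prod>t\<leftarrow>[s1, s2] @ replicate (n - 2) 0. [:- complex_of_real (t^2), 1:])"
  proof -
    have "[:- complex_of_real (0^2), 1:] = [:0, 1:]" by simp
    then show ?thesis
      unfolding rank2_svd_adjoint_mult[OF svd] char_poly_orthonormal_pair[OF n v orth]
      by (simp only: map_append list.map map_replicate prod_list.append prod_list.Cons
          prod_list.Nil prod_list_replicate mult_1_right mult.assoc)
  qed
qed

lemma rank2_svd_of_eigenvectors:
  fixes M :: "complex mat" and l1 l2 :: real
  assumes M: "M \<in> carrier_mat 2 2"
    and q: "q1 \<in> carrier_vec 2" "q2 \<in> carrier_vec 2"
    and orth: "q1 \<bullet>c q1 = 1" "q2 \<bullet>c q2 = 1" "q1 \<bullet>c q2 = 0"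
    and eig: "mat_adjoint M * M *\<^sub>v q1 = complex_of_real l1 \<cdot>\<^sub>v q1"
      "mat_adjoint M * M *\<^sub>v q2 = complex_of_real l2 \<cdot>\<^sub>v q2"
    and l: "l2 \<le> l1" "0 < l2"
  shows "rank2_svd 2 M (sqrt l1) (sqrt l2)
    (complex_of_real (1 / sqrt l1) \<cdot>\<^sub>v (M *\<^sub>v q1)) (complex_of_real (1 / sqrt l2) \<cdot>\<^sub>v (M *\<^sub>v q2)) q1 q2"
proof -
  have Mq: "M *\<^sub>v q1 \<in> carrier_vec 2" "M *\<^sub>v q2 \<in> carrier_vec 2" using M q by auto
  have gram: "(M *\<^sub>v q) \<bullet>c (M *\<^sub>v q') = q \<bullet>c (mat_adjoint M * M *\<^sub>v q')"
    if "q \<in> carrier_vec 2" "q' \<in> carrier_vec 2" for q q'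
    using mult_mat_vec_cscalar_prod[OF M that(1) mult_mat_vec_carrier[OF M that(2)]]
      assoc_mult_mat_vec[OF mat_adjoint_carrier[OF M] M that(2)] by simp
  have norms: "(M *\<^sub>v q1) \<bullet>c (M *\<^sub>v q1) = l1" "(M *\<^sub>v q2) \<bullet>c (M *\<^sub>v q2) = l2"
    "(M *\<^sub>v q1) \<bullet>c (M *\<^sub>v q2) = 0"
    using q orth by (simp_all add: gram eig cscalar_prod_smult_right[of _ 2])
  have unit: "complex_of_real (1 / sqrt l) * complex_of_real (1 / sqrt l) * complex_of_real l = 1"
    if "0 < l" for l
    using that by (simp flip: of_real_mult)
  have scaled: "complex_of_real (sqrt l) \<cdot>\<^sub>m outer_adj (complex_of_real (1 / sqrt l) \<cdot>\<^sub>v (M *\<^sub>v q)) q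
      = M * outer_adj q q" if "0 < l" "q \<in> carrier_vec 2" for l q
    using that M by (simp add: smult_smult_assoc mult_outer_adj flip: outer_adj_smult_left of_real_mult)
  have "M = M * (outer_adj q1 q1 + outer_adj q2 q2)"
    using M by (simp add: outer_adj_orthonormal_pair_2[OF q orth])
  also have "\<dots> = M * outer_adj q1 q1 + M * outer_adj q2 q2"
    using M q by (intro mult_add_distrib_mat) auto
  also have "\<dots> = complex_of_real (sqrt l1) \<cdot>\<^sub>m outer_adj (complex_of_real (1 / sqrt l1) \<cdot>\<^sub>v (M *\<^sub>v q1)) q1
      + complex_of_real (sqrt l2) \<cdot>\<^sub>m outer_adj (complex_of_real (1 / sqrt l2) \<cdot>\<^sub>v (M *\<^sub>v q2)) q2"
    using l by (simp only: scaled[OF _ q(1)] scaled[OF _ q(2)])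
  finally have "M = \<dots>" .
  then show ?thesis
    unfolding rank2_svd_def using q orth l Mq norms unit[of l1] unit[of l2]
    by (simp add: cscalar_prod_smult_left[of _ 2] cscalar_prod_smult_right[of _ 2] mult.assoc)
qed

lemma rank2_svd_isometry:
  fixes G F M :: "complex mat"
  assumes G: "G \<in> carrier_mat n 2" and F: "F \<in> carrier_mat n 2"
    and isoG: "mat_adjoint G * G = 1\<^sub>m 2" and isoF: "mat_adjoint F * F = 1\<^sub>m 2"
    and svd: "rank2_svd 2 M s1 s2 p1 p2 q1 q2"
  shows "rank2_svd n (G * M * mat_adjoint F) s1 s2 (G *\<^sub>v p1) (G *\<^sub>v p2) (F *\<^sub>v q1) (F *\<^sub>v q2)"
proof -
  from svd have p: "p1 \<in> carrier_vec 2" "p2 \<in> carrier_vec 2" and q: "q1 \<in> carrier_vec 2" "q2 \<in> carrier_vec 2"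
    and M: "M = complex_of_real s1 \<cdot>\<^sub>m outer_adj p1 q1 + complex_of_real s2 \<cdot>\<^sub>m outer_adj p2 q2"
    unfolding rank2_svd_def by auto
  have inner: "(U *\<^sub>v v) \<bullet>c (U *\<^sub>v v') = v \<bullet>c v'"
    if U: "U \<in> carrier_mat n 2" "mat_adjoint U * U = 1\<^sub>m 2" and "v \<in> carrier_vec 2" "v' \<in> carrier_vec 2"
    for U :: "complex mat" and v v'
    using mult_mat_vec_cscalar_prod[OF U(1) that(3) mult_mat_vec_carrier[OF U(1) that(4)]]
      assoc_mult_mat_vec[OF mat_adjoint_carrier[OF U(1)] U(1) that(4)] U(2) that(4) by simp
  have summand: "G * (complex_of_real s \<cdot>\<^sub>m outer_adj p q) * mat_adjoint F
      = complex_of_real s \<cdot>\<^sub>m outer_adj (G *\<^sub>v p) (F *\<^sub>v q)"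
    if p: "p \<in> carrier_vec 2" and q: "q \<in> carrier_vec 2" for s p q
  proof -
    have "G * (complex_of_real s \<cdot>\<^sub>m outer_adj p q) = complex_of_real s \<cdot>\<^sub>m outer_adj (G *\<^sub>v p) q"
      using mult_smult_distrib[OF G outer_adj_carrier[OF p q]] mult_outer_adj[OF G p] by simp
    moreover have "outer_adj (G *\<^sub>v p) q \<in> carrier_mat n 2"
      by (rule outer_adj_carrier[OF mult_mat_vec_carrier[OF G p] q])
    ultimately show ?thesis
      using mult_smult_assoc_mat[OF _ mat_adjoint_carrier[OF F]] outer_adj_mult_adjoint[OF F q] by simp
  qed
  have "G * M * mat_adjoint F
      = G * (complex_of_real s1 \<cdot>\<^sub>m outer_adj p1 q1) * mat_adjoint F
        + G * (complex_of_real s2 \<cdot>\<^sub>m outer_adj p2 q2) * mat_adjoint F"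
  proof -
    have X: "complex_of_real s1 \<cdot>\<^sub>m outer_adj p1 q1 \<in> carrier_mat 2 2"
      and Y: "complex_of_real s2 \<cdot>\<^sub>m outer_adj p2 q2 \<in> carrier_mat 2 2" using p q by auto
    show ?thesis
      unfolding M mult_add_distrib_mat[OF G X Y]
      by (rule add_mult_distrib_mat[OF mult_carrier_mat[OF G X] mult_carrier_mat[OF G Y] mat_adjoint_carrier[OF F]])
  qed
  then have "G * M * mat_adjoint F = complex_of_real s1 \<cdot>\<^sub>m outer_adj (G *\<^sub>v p1) (F *\<^sub>v q1)
      + complex_of_real s2 \<cdot>\<^sub>m outer_adj (G *\<^sub>v p2) (F *\<^sub>v q2)"
    using p q by (simp add: summand)
  with svd G F p q show ?thesis
    unfolding rank2_svd_def by (simp add: inner[OF G isoG] inner[OF F isoF])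
qed

lemma quadratic_roots_pos:
  fixes T P :: real
  assumes "0 < P" and "4 * P < T^2" and "0 < T"
  obtains l1 l2 where "l2 < l1" "0 < l2" "l1 + l2 = T" "l1 * l2 = P"
proof
  define D where "D = sqrt (T^2 - 4 * P)"
  have D: "0 < D" "D^2 = T^2 - 4 * P" using assms(2) by (simp_all add: D_def)
  have "D^2 < T^2" using D(2) assms(1) by simp
  then have "D < T" by (rule power_less_imp_less_base) (use assms(3) in simp)
  then show "(T - D) / 2 < (T + D) / 2" "0 < (T - D) / 2" "(T + D) / 2 + (T - D) / 2 = T"
    using D(1) by (simp_all add: field_simps)
  show "(T + D) / 2 * ((T - D) / 2) = P"
    using D(2) by (simp add: field_simps power2_eq_square)
qed

section \<open>The bordered matrix and its compression\<close>

definition border_mat :: "nat \<Rightarrow> complex vec \<Rightarrow> complex vec \<Rightarrow> complex mat" where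
  "border_mat n x y = outer_adj x (unit_vec n (n - 1)) + outer_adj (unit_vec n (n - 1)) y"

context
  fixes n :: nat and x y :: "complex vec"
  assumes x: "x \<in> carrier_vec n" and y: "y \<in> carrier_vec n"
begin

lemma border_mat_carrier: "border_mat n x y \<in> carrier_mat n n"
  unfolding border_mat_def using x y by simp

lemma border_mat_index:
  "i < n \<Longrightarrow> j < n \<Longrightarrow>
    border_mat n x y $$ (i, j) = (if j = n - 1 then x $ i else 0) + (if i = n - 1 then cnj (y $ j) else 0)"
  unfolding border_mat_def using x y by simp

lemma border_mat_mult_vec:
  assumes "0 < n" and w: "w \<in> carrier_vec n"
  shows "border_mat n x y *\<^sub>v w = w $ (n - 1) \<cdot>\<^sub>v x + (w \<bullet>c y) \<cdot>\<^sub>v unit_vec n (n - 1)"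
proof -
  have "w \<bullet>c unit_vec n (n - 1) = w $ (n - 1)"
    using assms by (simp add: cscalar_prod_unit_vec)
  then show ?thesis
    unfolding border_mat_def using x y w
    by (simp add: add_mult_distrib_mat_vec[of _ n n] outer_adj_mult_vec)
qed

lemma mat_adjoint_border_mat: "mat_adjoint (border_mat n x y) = border_mat n y x"
  using x y border_mat_carrier by (intro eq_matI) (auto simp: border_mat_def)

end

lemma border_mat_rank:
  assumes n: "2 \<le> n" and x: "x \<in> carrier_vec n" and y: "y \<in> carrier_vec n"
    and x0: "x $ 0 \<noteq> 0" and y0: "y $ 0 \<noteq> 0"
  shows "vec_space.rank n (border_mat n x y) = 2"
proof (rule antisym)
  let ?B = "border_mat n x y" and ?e = "unit_vec n (n - 1)"
  have B: "?B \<in> carrier_mat n n" by (rule border_mat_carrier[OF x y])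
  have outer_rank: "vec_space.rank n (outer_adj u v) \<le> 1" if "u \<in> carrier_vec n" "v \<in> carrier_vec n" for u v
    using that by (intro vec_space.rank_le_1_product_entries[where f = "\<lambda>i. u $ i" and g = "\<lambda>j. cnj (v $ j)"]) auto
  have "vec_space.rank n ?B \<le> vec_space.rank n (outer_adj x ?e) + vec_space.rank n (outer_adj ?e y)"
    unfolding border_mat_def using x y by (intro vec_space.rank_subadditive[where nc = n]) auto
  also have "\<dots> \<le> 2" using outer_rank[of x ?e] outer_rank[of ?e y] x y by simp
  finally show "vec_space.rank n ?B \<le> 2" .
  let ?I = "{0, n - 1}"
  have card: "card {i. i < n \<and> i \<in> ?I} = 2"
    using n by (subgoal_tac "{i. i < n \<and> i \<in> ?I} = ?I") auto
  have pick: "pick ?I 0 = 0" "pick ?I 1 = n - 1"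
  proof -
    show "pick ?I 0 = 0" using pick_card_in_set[of 0 ?I] by simp
    have "{a \<in> ?I. a < n - 1} = {0}" using n by auto
    then show "pick ?I 1 = n - 1" using pick_card_in_set[of "n - 1" ?I] by simp
  qed
  have S: "submatrix ?B ?I ?I \<in> carrier_mat 2 2" using B card unfolding submatrix_def by auto
  have "det (submatrix ?B ?I ?I) = - (x $ 0 * cnj (y $ 0))"
    unfolding det_2x2[OF S] using B card n pick
    by (simp add: submatrix_index border_mat_index[OF x y])
  then have "det (submatrix ?B ?I ?I) \<noteq> 0" using x0 y0 by simp
  from vec_space.rank_gt_minor[OF B this] card show "2 \<le> vec_space.rank n ?B" by simp
qed

definition border_compression :: "real \<Rightarrow> real \<Rightarrow> complex \<Rightarrow> complex mat" where
  "border_compression a b c = mat_of_rows_list 2 [[0, complex_of_real a], [complex_of_real b, c]]"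

lemma border_compression_carrier: "border_compression a b c \<in> carrier_mat 2 2"
  by (simp add: border_compression_def mat_of_rows_list_def numeral_2_eq_2)

(* With M = border_compression a b c: (b c, l - b^2) spans the kernel of the first row
   (b^2 - l, b c) of M^* M - l I, and the second row vanishes on it exactly when l solves the
   characteristic equation of M^* M. *)
lemma border_compression_eigenvector:
  fixes a b l :: real and c :: complex
  assumes "l^2 - (a^2 + b^2 + (cmod c)^2) * l + a^2 * b^2 = 0"
  shows "mat_adjoint (border_compression a b c) * border_compression a b c
      *\<^sub>v vec_of_list [complex_of_real b * c, complex_of_real (l - b^2)]
    = complex_of_real l \<cdot>\<^sub>v vec_of_list [complex_of_real b * c, complex_of_real (l - b^2)]"
proof -
  let ?M = "border_compression a b c"
  let ?w = "vec_of_list [complex_of_real b * c, complex_of_real (l - b^2)]"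
  have w: "?w \<in> carrier_vec 2" by (simp add: carrier_vecI)
  have Mw: "?M *\<^sub>v ?w = vec_of_list [complex_of_real (a * (l - b^2)), complex_of_real l * c]"
    by (intro eq_vecI) (auto simp: border_compression_def mat_of_rows_list_def scalar_prod_def
        numeral_2_eq_2 less_Suc_eq vec_of_list_index algebra_simps)
  have "mat_adjoint ?M *\<^sub>v vec_of_list [complex_of_real (a * (l - b^2)), complex_of_real l * c]
      = vec_of_list [complex_of_real l * (complex_of_real b * c),
          complex_of_real (a^2 * (l - b^2)) + complex_of_real l * (cnj c * c)]"
    by (intro eq_vecI) (auto simp: border_compression_def mat_of_rows_list_def scalar_prod_def
        numeral_2_eq_2 less_Suc_eq vec_of_list_index algebra_simps)
  also have "\<dots> = complex_of_real l \<cdot>\<^sub>v ?w"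
  proof -
    have "a^2 * (l - b^2) + l * (cmod c)^2 = l * (l - b^2)"
      using assms by (simp add: algebra_simps power2_eq_square)
    then have "complex_of_real (a^2 * (l - b^2)) + complex_of_real l * (cnj c * c)
        = complex_of_real l * complex_of_real (l - b^2)"
      by (metis complex_norm_square mult.commute of_real_add of_real_mult)
    then show ?thesis
      by (intro eq_vecI) (auto simp: numeral_2_eq_2 less_Suc_eq vec_of_list_index)
  qed
  finally show ?thesis
    using assoc_mult_mat_vec[OF mat_adjoint_carrier[OF border_compression_carrier]
        border_compression_carrier w] Mw by simp
qed

lemma border_compression_orthonormal_eigenvectors:
  fixes a b l1 l2 :: real and c :: complex
  assumes b: "0 < b" and c: "c \<noteq> 0"
    and vieta: "l1 + l2 = a^2 + b^2 + (cmod c)^2" "l1 * l2 = a^2 * b^2"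
  obtains q1 q2 where "q1 \<in> carrier_vec 2" "q2 \<in> carrier_vec 2"
    "q1 \<bullet>c q1 = 1" "q2 \<bullet>c q2 = 1" "q1 \<bullet>c q2 = 0"
    "mat_adjoint (border_compression a b c) * border_compression a b c *\<^sub>v q1 = complex_of_real l1 \<cdot>\<^sub>v q1"
    "mat_adjoint (border_compression a b c) * border_compression a b c *\<^sub>v q2 = complex_of_real l2 \<cdot>\<^sub>v q2"
proof -
  let ?K = "mat_adjoint (border_compression a b c) * border_compression a b c"
  define r where "r = (cmod c)^2"
  have r: "0 < r" using c by (simp add: r_def)
  define w where "w l = vec_of_list [complex_of_real b * c, complex_of_real (l - b^2)]" for l
  define q where "q l = complex_of_real (1 / sqrt (b^2 * r + (l - b^2)^2)) \<cdot>\<^sub>v w l" for l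
  have w: "w l \<in> carrier_vec 2" for l by (simp add: w_def carrier_vecI)
  have q: "q l \<in> carrier_vec 2" for l by (simp add: q_def w)
  have w_inner: "w l \<bullet>c w l' = complex_of_real (b^2 * r + (l - b^2) * (l' - b^2))" for l l'
    using complex_norm_square[of c]
    by (simp add: w_def cscalar_prod_sum[of _ 2] numeral_2_eq_2 r_def vec_of_list_index algebra_simps)
  have "q l \<bullet>c q l = 1" for l
  proof -
    have "0 < b^2 * r + (l - b^2)^2" using b r by (simp add: add_pos_nonneg)
    then show ?thesis
      by (simp add: q_def w_inner cscalar_prod_smult_left[of _ 2] cscalar_prod_smult_right[of _ 2] w
          power2_eq_square flip: of_real_mult of_real_add)
  qed
  moreover have "q l1 \<bullet>c q l2 = 0"
  proof -
    have "b^2 * r + (l1 - b^2) * (l2 - b^2) = b^2 * r + l1 * l2 - b^2 * (l1 + l2) + b^2 * b^2"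
      by (simp add: algebra_simps)
    also have "\<dots> = 0"
      unfolding vieta r_def by (simp add: algebra_simps)
    finally show ?thesis
      by (simp add: q_def w_inner cscalar_prod_smult_left[of _ 2] cscalar_prod_smult_right[of _ 2] w)
  qed
  moreover have "?K *\<^sub>v q l = complex_of_real l \<cdot>\<^sub>v q l" if "l = l1 \<or> l = l2" for l
  proof -
    have "(l - l1) * (l - l2) = 0" using that by auto
    then have char_eq: "l^2 - (a^2 + b^2 + (cmod c)^2) * l + a^2 * b^2 = 0"
      unfolding vieta[symmetric] by (simp add: algebra_simps power2_eq_square)
    have K: "?K \<in> carrier_mat 2 2"
      by (rule mult_carrier_mat[OF mat_adjoint_carrier[OF border_compression_carrier] border_compression_carrier])
    show ?thesis
      unfolding q_def mult_mat_vec[OF K w] border_compression_eigenvector[OF char_eq, folded w_def]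
      by (simp add: smult_smult_assoc mult.commute)
  qed
  ultimately show ?thesis using that q by blast
qed

lemma border_compression_rank2_svd_exists:
  fixes a b :: real and c :: complex
  assumes a: "0 < a" and b: "0 < b" and c: "c \<noteq> 0"
  shows "\<exists>s1 s2 p1 p2 q1 q2. rank2_svd 2 (border_compression a b c) s1 s2 p1 p2 q1 q2 \<and> s2 < s1"
proof -
  define r where "r = (cmod c)^2"
  have r: "0 < r" using c by (simp add: r_def)
  have P: "0 < a^2 * b^2" using a b by simp
  have T: "0 < a^2 + b^2 + r" using r by (simp add: add_nonneg_pos)
  have "(a^2 + b^2 + r)^2 - 4 * (a^2 * b^2) = (a^2 - b^2)^2 + r * (2 * a^2 + 2 * b^2 + r)"
    by (simp add: algebra_simps power2_eq_square)
  moreover have "0 < r * (2 * a^2 + 2 * b^2 + r)" using r by (simp add: add_nonneg_pos)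
  ultimately have disc: "4 * (a^2 * b^2) < (a^2 + b^2 + r)^2"
    using zero_le_power2[of "a^2 - b^2"] by linarith
  obtain l1 l2 where l: "l2 < l1" "0 < l2" and vieta: "l1 + l2 = a^2 + b^2 + r" "l1 * l2 = a^2 * b^2"
    by (rule quadratic_roots_pos[OF P disc T])
  obtain q1 q2 where "q1 \<in> carrier_vec 2" "q2 \<in> carrier_vec 2"
      "q1 \<bullet>c q1 = 1" "q2 \<bullet>c q2 = 1" "q1 \<bullet>c q2 = 0"
      "mat_adjoint (border_compression a b c) * border_compression a b c *\<^sub>v q1 = complex_of_real l1 \<cdot>\<^sub>v q1"
      "mat_adjoint (border_compression a b c) * border_compression a b c *\<^sub>v q2 = complex_of_real l2 \<cdot>\<^sub>v q2"
    using border_compression_orthonormal_eigenvectors[OF b c vieta[unfolded r_def]] by blast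
  from rank2_svd_of_eigenvectors[OF border_compression_carrier this less_imp_le[OF l(1)] l(2)]
    show ?thesis using l by (meson real_sqrt_less_mono)
qed

lemma head_last_isometry:
  fixes v :: "complex vec"
  assumes v: "v \<in> carrier_vec n" and k: "k < n - 1" "v $ k \<noteq> 0"
  obtains a g where "0 < a" "g \<in> carrier_vec n" "g $ (n - 1) = 0"
    "\<And>i. i < n - 1 \<Longrightarrow> v $ i = complex_of_real a * g $ i"
    "mat_adjoint (mat_of_cols n [g, unit_vec n (n - 1)]) * mat_of_cols n [g, unit_vec n (n - 1)] = 1\<^sub>m 2"
proof -
  define h where "h = vec n (\<lambda>i. if i = n - 1 then 0 else v $ i)"
  define a where "a = sqrt (\<Sum>i<n. (cmod (h $ i))^2)"
  define g where "g = complex_of_real (1 / a) \<cdot>\<^sub>v h"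
  have h: "h \<in> carrier_vec n" by (simp add: h_def)
  have "0 < (cmod (h $ k))^2" using k by (simp add: h_def)
  also have "\<dots> \<le> (\<Sum>i<n. (cmod (h $ i))^2)" using k by (intro member_le_sum) auto
  finally have a: "0 < a" by (simp add: a_def)
  have "h \<bullet>c h = (\<Sum>i<n. complex_of_real ((cmod (h $ i))^2))"
    unfolding cscalar_prod_sum[OF h h] by (intro sum.cong refl) (rule complex_norm_square[symmetric])
  also have "\<dots> = complex_of_real (a^2)"
  proof -
    have "a^2 = (\<Sum>i<n. (cmod (h $ i))^2)" unfolding a_def by (simp add: sum_nonneg)
    then show ?thesis unfolding of_real_sum by simp
  qed
  finally have "h \<bullet>c h = complex_of_real (a^2)" .
  then have "g \<bullet>c g = 1"
    using a h unfolding g_def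
    by (simp add: cscalar_prod_smult_left[of _ n] cscalar_prod_smult_right[of _ n] power2_eq_square
        flip: of_real_mult)
  moreover have g: "g \<in> carrier_vec n" "g $ (n - 1) = 0" using k by (auto simp: g_def h_def)
  moreover have N: "n - 1 < n" using k by simp
  then have "g \<bullet>c unit_vec n (n - 1) = 0" "(unit_vec n (n - 1) :: complex vec) \<bullet>c unit_vec n (n - 1) = 1"
    using g by (simp_all add: cscalar_prod_unit_vec)
  ultimately have "mat_adjoint (mat_of_cols n [g, unit_vec n (n - 1)]) * mat_of_cols n [g, unit_vec n (n - 1)]
      = 1\<^sub>m 2" by (intro mat_adjoint_mult_mat_of_cols_2) auto
  moreover have "v $ i = complex_of_real a * g $ i" if "i < n - 1" for i
    using that a by (simp add: g_def h_def)
  ultimately show ?thesis using that a g by blast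
qed

lemma border_mat_factorization:
  fixes a b :: real
  assumes x: "x \<in> carrier_vec n" and y: "y \<in> carrier_vec n"
    and g: "g \<in> carrier_vec n" "g $ (n - 1) = 0" "\<And>i. i < n - 1 \<Longrightarrow> x $ i = complex_of_real a * g $ i"
    and f: "f \<in> carrier_vec n" "f $ (n - 1) = 0" "\<And>i. i < n - 1 \<Longrightarrow> y $ i = complex_of_real b * f $ i"
  shows "border_mat n x y = mat_of_cols n [g, unit_vec n (n - 1)]
      * border_compression a b (x $ (n - 1) + cnj (y $ (n - 1)))
      * mat_adjoint (mat_of_cols n [f, unit_vec n (n - 1)])" (is "_ = ?R")
proof (rule eq_matI)
  fix i j assume "i < dim_row ?R" "j < dim_col ?R"
  then have "i < n" "j < n" by (auto simp: border_compression_def mat_of_rows_list_def)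
  with g f show "border_mat n x y $$ (i, j) = ?R $$ (i, j)"
    by (simp add: border_mat_index[OF x y] scalar_prod_def numeral_2_eq_2 mat_of_cols_index
        border_compression_def mat_of_rows_list_def)
qed (use x y in \<open>auto simp: border_mat_def border_compression_def mat_of_rows_list_def\<close>)

lemma border_mat_rank2_svd_exists:
  assumes n: "2 \<le> n" and x: "x \<in> carrier_vec n" and y: "y \<in> carrier_vec n"
    and x0: "x $ 0 \<noteq> 0" and y0: "y $ 0 \<noteq> 0" and corner: "x $ (n - 1) + cnj (y $ (n - 1)) \<noteq> 0"
  shows "\<exists>s1 s2 u1 u2 v1 v2. rank2_svd n (border_mat n x y) s1 s2 u1 u2 v1 v2 \<and> s2 < s1"
proof -
  let ?e = "unit_vec n (n - 1)"
  have "0 < n - 1" using n by simp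
  obtain a g where a: "0 < a" and g: "g \<in> carrier_vec n" "g $ (n - 1) = 0"
      "\<And>i. i < n - 1 \<Longrightarrow> x $ i = complex_of_real a * g $ i"
    and G: "mat_adjoint (mat_of_cols n [g, ?e]) * mat_of_cols n [g, ?e] = 1\<^sub>m 2"
    using head_last_isometry[OF x \<open>0 < n - 1\<close> x0] by blast
  obtain b f where b: "0 < b" and f: "f \<in> carrier_vec n" "f $ (n - 1) = 0"
      "\<And>i. i < n - 1 \<Longrightarrow> y $ i = complex_of_real b * f $ i"
    and F: "mat_adjoint (mat_of_cols n [f, ?e]) * mat_of_cols n [f, ?e] = 1\<^sub>m 2"
    using head_last_isometry[OF y \<open>0 < n - 1\<close> y0] by blast
  obtain s1 s2 p1 p2 q1 q2 where
    svd: "rank2_svd 2 (border_compression a b (x $ (n - 1) + cnj (y $ (n - 1)))) s1 s2 p1 p2 q1 q2"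
    and gap: "s2 < s1"
    using border_compression_rank2_svd_exists[OF a b corner] by blast
  have "mat_of_cols n [g, ?e] \<in> carrier_mat n 2" "mat_of_cols n [f, ?e] \<in> carrier_mat n 2"
    using mat_of_cols_carrier[of n "[g, ?e]"] mat_of_cols_carrier[of n "[f, ?e]"] by (simp_all add: numeral_2_eq_2)
  from rank2_svd_isometry[OF this G F svd] have "rank2_svd n (border_mat n x y) s1 s2
      (mat_of_cols n [g, ?e] *\<^sub>v p1) (mat_of_cols n [g, ?e] *\<^sub>v p2)
      (mat_of_cols n [f, ?e] *\<^sub>v q1) (mat_of_cols n [f, ?e] *\<^sub>v q2)"
    by (simp only: border_mat_factorization[OF x y g f])
  with gap show ?thesis by blast
qed

lemma border_mat_singular_pair_head:
  fixes s :: complex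
  assumes n: "2 \<le> n" and x: "x \<in> carrier_vec n" and y: "y \<in> carrier_vec n"
    and x0: "x $ 0 \<noteq> 0" and y0: "y $ 0 \<noteq> 0" and corner: "x $ (n - 1) + cnj (y $ (n - 1)) \<noteq> 0"
    and u: "u \<in> carrier_vec n" "u \<noteq> 0\<^sub>v n" and v: "v \<in> carrier_vec n" and s: "s \<noteq> 0"
    and Bv: "border_mat n x y *\<^sub>v v = s \<cdot>\<^sub>v u" and Bu: "border_mat n y x *\<^sub>v u = s \<cdot>\<^sub>v v"
  shows "u $ 0 \<noteq> 0 \<and> v $ 0 \<noteq> 0"
proof -
  let ?N = "n - 1"
  have N: "?N < n" "0 < ?N" using n by auto
  have Bv_i: "s * u $ i = v $ ?N * x $ i + (if i = ?N then v \<bullet>c y else 0)" if "i < n" for i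
    using arg_cong[OF Bv, of "\<lambda>w. w $ i"] border_mat_mult_vec[OF x y _ v] that x u(1) by auto
  have Bu_i: "s * v $ i = u $ ?N * y $ i + (if i = ?N then u \<bullet>c x else 0)" if "i < n" for i
    using arg_cong[OF Bu, of "\<lambda>w. w $ i"] border_mat_mult_vec[OF y x _ u(1)] that y v by auto
  have vN: "v $ ?N \<noteq> 0"
  proof
    assume vN: "v $ ?N = 0"
    then have u_i: "u $ i = 0" if "i < n" "i \<noteq> ?N" for i using Bv_i[OF that(1)] that s by simp
    then have "u \<bullet>c x = u $ ?N * cnj (x $ ?N)" by (rule cscalar_prod_single_support[OF u(1) x N(1)])
    then have "u $ ?N * cnj (x $ ?N + cnj (y $ ?N)) = 0"
      using Bu_i[OF N(1)] vN by (simp add: algebra_simps)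
    then have "u $ ?N = 0"
      using corner by (metis complex_cnj_cnj complex_cnj_add complex_cnj_zero_iff mult_eq_0_iff)
    with u_i have "u = 0\<^sub>v n" using u(1) by (intro eq_vecI) auto
    with u(2) show False ..
  qed
  have uN: "u $ ?N \<noteq> 0"
  proof
    assume uN: "u $ ?N = 0"
    then have "v $ i = 0" if "i < n" "i \<noteq> ?N" for i using Bu_i[OF that(1)] that s by simp
    then have "v \<bullet>c y = v $ ?N * cnj (y $ ?N)" by (rule cscalar_prod_single_support[OF v y N(1)])
    then have "v $ ?N * (x $ ?N + cnj (y $ ?N)) = 0"
      using Bv_i[OF N(1)] uN by (simp add: algebra_simps)
    with vN corner show False by simp
  qed
  have "s * u $ 0 = v $ ?N * x $ 0" "s * v $ 0 = u $ ?N * y $ 0"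
    using Bv_i[of 0] Bu_i[of 0] N by auto
  then show ?thesis using vN uN x0 y0 s by auto
qed

lemma border_mat_rank2_svd_summands_corner:
  assumes n: "2 \<le> n" and x: "x \<in> carrier_vec n" and y: "y \<in> carrier_vec n"
    and x0: "x $ 0 \<noteq> 0" and y0: "y $ 0 \<noteq> 0" and corner: "x $ (n - 1) + cnj (y $ (n - 1)) \<noteq> 0"
    and svd: "rank2_svd n (border_mat n x y) s1 s2 u1 u2 v1 v2"
  shows "(complex_of_real s1 \<cdot>\<^sub>m outer_adj u1 v1) $$ (0, 0) \<noteq> 0
    \<and> (complex_of_real s2 \<cdot>\<^sub>m outer_adj u2 v2) $$ (0, 0) \<noteq> 0"
proof -
  from svd have u: "u1 \<in> carrier_vec n" "u2 \<in> carrier_vec n" "u1 \<noteq> 0\<^sub>v n" "u2 \<noteq> 0\<^sub>v n"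
    and v: "v1 \<in> carrier_vec n" "v2 \<in> carrier_vec n" and s: "0 < s2" "s2 \<le> s1"
    unfolding rank2_svd_def by auto
  note Bv = rank2_svd_mult_vec[OF svd]
  note Bu = rank2_svd_mult_vec[OF rank2_svd_adjoint[OF svd], unfolded mat_adjoint_border_mat[OF x y]]
  have "u1 $ 0 \<noteq> 0 \<and> v1 $ 0 \<noteq> 0" "u2 $ 0 \<noteq> 0 \<and> v2 $ 0 \<noteq> 0"
    using border_mat_singular_pair_head[OF n x y x0 y0 corner u(1,3) v(1) _ Bv(1) Bu(1)]
      border_mat_singular_pair_head[OF n x y x0 y0 corner u(2,4) v(2) _ Bv(2) Bu(2)] s by simp_all
  then show ?thesis using u v n s by simp
qed

theorem lemma3p1:
  fixes n :: nat and x y :: "complex vec" and B :: "complex mat"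
  assumes "n \<ge> 2" and "x \<in> carrier_vec n" and "y \<in> carrier_vec n"
    and "B = outer_adj x (unit_vec n (n - 1)) + outer_adj (unit_vec n (n - 1)) y"
    and "B $$ (0, n - 1) \<noteq> 0" and "B $$ (n - 1, 0) \<noteq> 0" and "B $$ (n - 1, n - 1) \<noteq> 0"
  shows "vec_space.rank n B = 2
    \<and> (\<exists>s1 s2 u1 u2 v1 v2. rank2_svd n B s1 s2 u1 u2 v1 v2)
    \<and> (\<forall>s1 s2 u1 u2 v1 v2. rank2_svd n B s1 s2 u1 u2 v1 v2 \<longrightarrow>
         (complex_of_real s1 \<cdot>\<^sub>m outer_adj u1 v1) $$ (0, 0) \<noteq> 0 \<and>
         (complex_of_real s2 \<cdot>\<^sub>m outer_adj u2 v2) $$ (0, 0) \<noteq> 0)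
    \<and> sing_vals B ! 0 > sing_vals B ! 1"
proof -
  note n = assms(1) and x = assms(2) and y = assms(3)
  have B: "B = border_mat n x y" unfolding assms(4) border_mat_def ..
  have x0: "x $ 0 \<noteq> 0" and y0: "y $ 0 \<noteq> 0" and corner: "x $ (n - 1) + cnj (y $ (n - 1)) \<noteq> 0"
    using assms(5-7) n unfolding B by (auto simp: border_mat_index[OF x y])
  obtain s1 s2 u1 u2 v1 v2 where svd: "rank2_svd n B s1 s2 u1 u2 v1 v2" and gap: "s2 < s1"
    using border_mat_rank2_svd_exists[OF n x y x0 y0 corner] unfolding B by blast
  show ?thesis
  proof (intro conjI)
    show "vec_space.rank n B = 2" unfolding B by (rule border_mat_rank[OF n x y x0 y0])
    show "\<exists>s1 s2 u1 u2 v1 v2. rank2_svd n B s1 s2 u1 u2 v1 v2" using svd by blast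
    show "\<forall>s1 s2 u1 u2 v1 v2. rank2_svd n B s1 s2 u1 u2 v1 v2 \<longrightarrow>
        (complex_of_real s1 \<cdot>\<^sub>m outer_adj u1 v1) $$ (0, 0) \<noteq> 0 \<and>
        (complex_of_real s2 \<cdot>\<^sub>m outer_adj u2 v2) $$ (0, 0) \<noteq> 0"
      unfolding B using border_mat_rank2_svd_summands_corner[OF n x y x0 y0 corner] by blast
    show "sing_vals B ! 0 > sing_vals B ! 1" using sing_vals_rank2_svd[OF n svd] gap by simp
  qed
qed

end
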